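(* There exists an absolute constant $C$ such that the following holds. Let $W$ be a non-negative integer-valued random variable with $EW=\lambda\in(0,\infty)$, let $Y\sim\mathrm{Poi}(\lambda)$, let $\eta_k$ and $g_1$ be as defined in the context. Then for every integer $k\ge0$: $$E\,g_1((W+1)\wedge k)\le C(\eta_k+1)\Big(\frac1\lambda+\frac{(k+1-\lambda)_+^2}{\lambda^2}\Big),$$ $$E\big[(W\wedge k)\,g_1(W\wedge k)\big]\le C(\eta_k+1)\Big(1+\frac{(k-\lambda)_+^2}{\lambda}\Big),$$ $$E\big[(W\wedge k)^2\,g_1(W\wedge k)\big]\le C(\eta_k+1)\Big(\lambda+(k-\lambda)_+^2+\frac{(k-\lambda)_+^3}{\lambda}\Big).$$
   Context: $a\wedge b=\min(a,b)$, $x_+=\max(x,0)$. For integers $k\ge 0$, $\eta_k=\sup\{P(W\ge r)/P(Y\ge r): r \text{ integer},\ \lambda\le r\le k\}$ (supremum of the empty set equal to $0$). The function $g_1:\{0,1,2,\dots\}\to\mathbb R$ is defined by $g_1(0)=0$ and, for integers $w\ge1$, $g_1(w)=\frac{e^\lambda w!}{\lambda^{w+1}}P(Y\le w)-\frac{e^\lambda (w-1)!}{\lambda^{w}}P(Y\le w-1)$. *)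

theory Defs
  imports "HOL-Probability.Probability"
begin

text \<open>The law of the non-negative integer-valued random variable W is a pmf on nat;
  Y ~ Poi(lambda) is poisson_pmf lambda.\<close>

definition pos_part :: "real \<Rightarrow> real" where
  "pos_part x = max x 0"

definition eta :: "nat pmf \<Rightarrow> real \<Rightarrow> nat \<Rightarrow> real" where
  "eta pW lam k =
     (let S = {r::nat. lam \<le> real r \<and> r \<le> k}
      in if S = {} then 0
         else Max ((\<lambda>r. measure_pmf.prob pW {r..} / measure_pmf.prob (poisson_pmf lam) {r..}) ` S))"

definition g1 :: "real \<Rightarrow> nat \<Rightarrow> real" where
  "g1 lam w = (if w = 0 then 0 else
     exp lam * fact w / lam ^ (w + 1) * measure_pmf.prob (poisson_pmf lam) {..w}
     - exp lam * fact (w - 1) / lam ^ w * measure_pmf.prob (poisson_pmf lam) {..w - 1})"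

end

theory Submission
  imports Defs
begin

(* Write p_j = P(Y = j) and T(s) = P(Y >= s) for Y ~ Poi(lam), and let W have law pW.
   1. For w >= 1, g1(w) = 1/w + (w - lam) P(Y <= w) / (lam w p_w).  Hence
        g1(w) <= (1 + psi(w)) / lam   and   w g1(w) <= 1 + phi(w) / lam,
      where phi(w) = (w - lam)_+ / p_w and psi(w) = phi(w) / w; both vanish for
      w <= lam and are nondecreasing.
   2. Layer cake: if f 0 = 0 then E f(min(W + d, k)) = sum_{r=1..k} P(W >= r - d) (f r - f(r - 1)).
      Increments with r <= lam vanish, those with lam <= r - d are bounded through
      P(W >= r - d) <= eta_k T(r - d), and the single remaining index (d = 1, r = ceil lam)
      is controlled by the lower bound p_m >= 1/(2 lam + 3) for the Poisson mode m.
   3. Summation by parts rewrites sum T(r - d) (f r - f(r - 1)) as T(k - d) f(k) + sum_{r<k} f(r) p_{r-d}.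
      The sum is explicit since phi(r) p_r = (r - lam)_+ and psi(r) p_{r-1} = (r - lam)_+ / lam,
      and the boundary term is bounded by the geometric tail bound T(s) <= p_s (s+1)/(s+1-lam).
   4. Elementary inequalities turn these estimates into the three stated bounds. *)

declare pmf_poisson[simp del]

section \<open>Generic facts about sums and truncated expectations\<close>

lemma prob_atLeast_eq_1_minus:
  "measure_pmf.prob (M::nat pmf) {N..} = 1 - measure_pmf.prob M {..<N}"
proof -
  have "space (measure_pmf M) - {..<N} = {N..}" by auto
  moreover have "measure_pmf.prob M (space (measure_pmf M) - {..<N}) = 1 - measure_pmf.prob M {..<N}"
    by (rule measure_pmf.prob_compl) simp
  ultimately show ?thesis by simp
qed

lemma telescope_min:
  "f (min n (k::nat)) = f 0 + (\<Sum>r\<in>{1..k}. if r \<le> n then f r - f (r - 1) else (0::real))"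
proof (induction k)
  case 0 then show ?case by simp
next
  case (Suc k)
  have "{1..Suc k} = insert (Suc k) {1..k}" by auto
  then have "(\<Sum>r\<in>{1..Suc k}. if r \<le> n then f r - f (r - 1) else (0::real))
     = (if Suc k \<le> n then f (Suc k) - f k else 0) + (\<Sum>r\<in>{1..k}. if r \<le> n then f r - f (r - 1) else 0)"
    by simp
  then show ?case using Suc.IH by (auto simp: min_def)
qed

text \<open>A function of a truncated variable takes finitely many values, hence is integrable.\<close>

lemma integrable_truncated:
  "integrable (measure_pmf pW) (\<lambda>w. (h::nat \<Rightarrow> real) (min (w + d) k))"
proof (rule measure_pmf.integrable_const_bound[where B = "\<Sum>j\<le>k. \<bar>h j\<bar>"])
  show "AE x in measure_pmf pW. norm (h (min (x + d) k)) \<le> (\<Sum>j\<le>k. \<bar>h j\<bar>)"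
    by (intro AE_I2) (auto intro!: member_le_sum)
qed simp

lemma expectation_truncated_layer:
  fixes f :: "nat \<Rightarrow> real" and pW :: "nat pmf"
  shows "measure_pmf.expectation pW (\<lambda>w. f (min (w + d) k)) =
     f 0 + (\<Sum>r\<in>{1..k}. measure_pmf.prob pW {r - d..} * (f r - f (r - 1)))"
proof -
  have layers: "f (min (w + d) k) = f 0 + (\<Sum>r\<in>{1..k}. (f r - f (r - 1)) * indicator {r - d..} w)" for w
    by (subst telescope_min[of f "w + d" k])
       (intro arg_cong2[where f="(+)"] refl sum.cong, auto simp: indicator_def le_diff_conv)
  have int_layer: "\<And>r. integrable (measure_pmf pW) (\<lambda>w. (f r - f (r - 1)) * indicator {r - d..} w)"
    by (intro integrable_mult_right integrable_real_indicator) (auto simp: less_top[symmetric])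
  have "measure_pmf.expectation pW (\<lambda>w. f (min (w + d) k)) =
      measure_pmf.expectation pW (\<lambda>w. f 0 + (\<Sum>r\<in>{1..k}. (f r - f (r - 1)) * indicator {r - d..} w))"
    by (simp only: layers)
  also have "\<dots> = f 0 + measure_pmf.expectation pW (\<lambda>w. \<Sum>r\<in>{1..k}. (f r - f (r - 1)) * indicator {r - d..} w)"
    by (subst Bochner_Integration.integral_add[OF _ Bochner_Integration.integrable_sum[OF int_layer]]) simp_all
  also have "\<dots> = f 0 + (\<Sum>r\<in>{1..k}. measure_pmf.expectation pW (\<lambda>w. (f r - f (r - 1)) * indicator {r - d..} w))"
    by (simp only: Bochner_Integration.integral_sum[OF int_layer])
  also have "\<dots> = f 0 + (\<Sum>r\<in>{1..k}. measure_pmf.prob pW {r - d..} * (f r - f (r - 1)))"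
    by (simp add: mult.commute)
  finally show ?thesis .
qed

lemma summation_by_parts_tail:
  fixes f T p :: "nat \<Rightarrow> real"
  assumes tail: "\<And>j. T j = p j + T (Suc j)" and f0: "f 0 = 0" and d: "d \<le> 1"
  shows "(\<Sum>r\<in>{1..k}. T (r - d) * (f r - f (r - 1))) = T (k - d) * f k + (\<Sum>r\<in>{1..<k}. f r * p (r - d))"
proof (induction k)
  case 0 then show ?case using f0 by simp
next
  case (Suc k)
  have "{1..Suc k} = insert (Suc k) {1..k}" by auto
  then have "(\<Sum>r\<in>{1..Suc k}. T (r - d) * (f r - f (r - 1)))
      = T (Suc k - d) * (f (Suc k) - f k) + (T (k - d) * f k + (\<Sum>r\<in>{1..<k}. f r * p (r - d)))"
    using Suc.IH by simp
  also have "\<dots> = T (Suc k - d) * f (Suc k) + (\<Sum>r\<in>{1..<Suc k}. f r * p (r - d))"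
  proof (cases "k = 0")
    case True then show ?thesis using f0 by simp
  next
    case False
    have "{1..<Suc k} = insert k {1..<k}" using False by auto
    moreover have "Suc k - d = Suc (k - d)" using False d by simp
    moreover note tail[of "k - d"]
    ultimately show ?thesis by (simp add: algebra_simps)
  qed
  finally show ?case .
qed

lemma sum_from_1_Suc_le:
  fixes g :: "nat \<Rightarrow> real"
  assumes "g 0 \<ge> 0"
  shows "(\<Sum>r\<in>{1..<Suc k}. g r) \<le> (\<Sum>r\<in>{1..<k}. g r) + g k"
proof (cases "k = 0")
  case True then show ?thesis using assms by simp
next
  case False
  hence "{1..<Suc k} = insert k {1..<k}" by auto
  then show ?thesis by simp
qed

lemma sum_pos_part_le: "(\<Sum>r\<in>{1..<k}. max (real r - l) 0) \<le> (max (real k - l) 0)^2"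
proof (induction k)
  case 0 then show ?case by simp
next
  case (Suc k)
  define a where "a = max (real k - l) 0"
  define b where "b = max (real (Suc k) - l) 0"
  have "(\<Sum>r\<in>{1..<Suc k}. max (real r - l) 0) \<le> (\<Sum>r\<in>{1..<k}. max (real r - l) 0) + a"
    unfolding a_def by (rule sum_from_1_Suc_le) simp
  also have "\<dots> \<le> a^2 + a" using Suc.IH unfolding a_def by simp
  also have "\<dots> \<le> b^2"
  proof (cases "real k \<le> l")
    case True
    then show ?thesis by (simp add: a_def)
  next
    case False
    hence "a = real k - l" "b = a + 1" "a \<ge> 0" by (auto simp: a_def b_def)
    then show ?thesis by (simp add: power2_eq_square algebra_simps)
  qed
  finally show ?case unfolding b_def .
qed

lemma sum_weighted_pos_part_le:
  "(\<Sum>r\<in>{1..<k}. real r * max (real r - l) 0) \<le> real k * (max (real k - l) 0)^2"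
proof (induction k)
  case 0 then show ?case by simp
next
  case (Suc k)
  define a where "a = max (real k - l) 0"
  define b where "b = max (real (Suc k) - l) 0"
  have "(\<Sum>r\<in>{1..<Suc k}. real r * max (real r - l) 0) \<le> (\<Sum>r\<in>{1..<k}. real r * max (real r - l) 0) + real k * a"
    unfolding a_def by (rule sum_from_1_Suc_le) simp
  also have "\<dots> \<le> real k * a^2 + real k * a" using Suc.IH unfolding a_def by simp
  also have "\<dots> \<le> real (Suc k) * b^2"
  proof (cases "real k \<le> l")
    case True
    then show ?thesis by (simp add: a_def)
  next
    case False
    hence ab: "a = real k - l" "b = a + 1" and a0: "a \<ge> 0" by (auto simp: a_def b_def)
    have "real (Suc k) * (a + 1)^2 = real k * a^2 + real k * a + (real k * a + real k + a^2 + 2 * a + 1)"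
      by (simp add: power2_eq_square algebra_simps)
    moreover have "real k * a \<ge> 0" "a^2 \<ge> 0" using a0 by auto
    ultimately show ?thesis using ab(2) a0 by simp
  qed
  finally show ?case unfolding b_def .
qed

lemma final_inequality_1:
  fixes l e K :: real
  assumes l: "0 < l" and e: "0 \<le> e"
  shows "1 / l + (e * ((if l < K then K / l else 0) + (max (K - l) 0)^2 / l) + (if l < K then (2 * l + 3) / l else 0)) / l
     \<le> 5 * (e + 1) * (1 / l + (max (K + 1 - l) 0)^2 / l^2)"
proof (cases "l < K")
  case False
  hence "1 / l + (e * ((if l < K then K / l else 0) + (max (K - l) 0)^2 / l) + (if l < K then (2 * l + 3) / l else 0)) / l
     = 1 / l" by simp
  also have "\<dots> \<le> 5 * (e + 1) * (1 / l)" using l e by (simp add: field_simps)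
  also have "\<dots> \<le> 5 * (e + 1) * (1 / l + (max (K + 1 - l) 0)^2 / l^2)"
    using l e by (intro mult_left_mono) auto
  finally show ?thesis .
next
  case True
  define x where "x = K - l"
  have x0: "x > 0" using True by (simp add: x_def)
  have m1: "max (K - l) 0 = x" "max (K + 1 - l) 0 = x + 1" using x0 by (auto simp: x_def)
  have lhs: "1 / l + (e * ((if l < K then K / l else 0) + (max (K - l) 0)^2 / l) + (if l < K then (2 * l + 3) / l else 0)) / l
      = (l + e * (l + x + x^2) + 2 * l + 3) / l^2"
    unfolding m1 using True l by (simp add: x_def field_simps power2_eq_square)
  have rhs: "5 * (e + 1) * (1 / l + (max (K + 1 - l) 0)^2 / l^2) = 5 * (e + 1) * (l + (x + 1)^2) / l^2"
    unfolding m1 using l by (simp add: field_simps power2_eq_square)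
  have "e * (l + x + x^2) \<le> e * (5 * (l + (x + 1)^2))"
    using e x0 l by (intro mult_left_mono) (auto simp: power2_eq_square algebra_simps)
  moreover have "3 * l + 3 \<le> 5 * (l + (x + 1)^2)" using x0 l by (simp add: power2_eq_square algebra_simps)
  ultimately have "l + e * (l + x + x^2) + 2 * l + 3 \<le> 5 * (e + 1) * (l + (x + 1)^2)"
    by (simp add: algebra_simps)
  hence "(l + e * (l + x + x^2) + 2 * l + 3) / l^2 \<le> 5 * (e + 1) * (l + (x + 1)^2) / l^2"
    using l by (intro divide_right_mono) auto
  then show ?thesis unfolding lhs rhs .
qed

text \<open>If K exceeds l then K is a positive integer, so either (K - l)_+ is at least 1/2 or l is;
  this is what makes the linear terms (K - l)_+ absorbable in the next two inequalities.\<close>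

lemma final_inequality_2:
  fixes l e K :: real
  assumes l: "0 < l" and e: "0 \<le> e" and K: "l < K \<Longrightarrow> 1 \<le> K"
  shows "1 + e * (l + max (K - l) 0 + (max (K - l) 0)^2) / l \<le> 5 * (e + 1) * (1 + (max (K - l) 0)^2 / l)"
proof -
  define x where "x = max (K - l) 0"
  have x0: "x \<ge> 0" by (simp add: x_def)
  have linear_term: "x \<le> l + 2 * x^2"
  proof (cases "x \<le> 1/2")
    case True
    show ?thesis
    proof (cases "x = 0")
      case True then show ?thesis using l by simp
    next
      case False
      hence "l < K" "x = K - l" using x0 by (auto simp: x_def max_def split: if_splits)
      hence "l \<ge> 1/2" using K \<open>x \<le> 1/2\<close> by linarith
      then show ?thesis using \<open>x \<le> 1/2\<close> by (smt (verit) zero_le_power2)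
    qed
  next
    case False
    have "x * 1 \<le> x * (2 * x)" using False by (intro mult_left_mono) auto
    then show ?thesis using l by (simp add: power2_eq_square)
  qed
  have "x / l \<le> (l + 2 * x^2) / l" using linear_term l by (intro divide_right_mono) auto
  hence "x / l \<le> 1 + 2 * (x^2 / l)" using l by (simp add: add_divide_distrib)
  hence "e * (1 + x / l + x^2 / l) \<le> e * (2 + 3 * (x^2 / l))" using e by (intro mult_left_mono) auto
  moreover have "e * (l + x + x^2) / l = e * (1 + x / l + x^2 / l)" using l by (simp add: field_simps)
  moreover have "1 + e * (2 + 3 * t) \<le> 5 * (e + 1) * (1 + t)" if "t \<ge> 0" for t
    using e that mult_nonneg_nonneg[OF e that] by (simp add: algebra_simps)
  ultimately show ?thesis unfolding x_def[symmetric] using l by (smt (verit) zero_le_divide_iff zero_le_power2)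
qed

lemma final_inequality_3:
  fixes l e K :: real
  assumes l: "0 < l" and e: "0 \<le> e" and K: "l < K \<Longrightarrow> 1 \<le> K"
  shows "l + e * ((l + max (K - l) 0)^2 + K * (max (K - l) 0)^2) / l
     \<le> 5 * (e + 1) * (l + (max (K - l) 0)^2 + (max (K - l) 0)^3 / l)"
proof -
  define x where "x = max (K - l) 0"
  have x0: "x \<ge> 0" by (simp add: x_def)
  have Kx: "K * x^2 = l * x^2 + x^3"
  proof (cases "l < K")
    case True then have "K = l + x" by (simp add: x_def)
    then show ?thesis by (simp add: power2_eq_square power3_eq_cube algebra_simps)
  next
    case False then show ?thesis by (simp add: x_def)
  qed
  have square: "(l + x)^2 \<le> 2 * l^2 + 2 * x^2"
  proof -
    have "0 \<le> (l - x)^2" by simp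
    then show ?thesis by (simp add: power2_eq_square algebra_simps)
  qed
  have quadratic_term: "x^2 / l \<le> 2 * x^2 + 2 * (x^3 / l)"
  proof (cases "x \<le> 1/2")
    case True
    show ?thesis
    proof (cases "x = 0")
      case True then show ?thesis by simp
    next
      case False
      hence "l < K" "x = K - l" using x0 by (auto simp: x_def max_def split: if_splits)
      hence "l \<ge> 1/2" using K \<open>x \<le> 1/2\<close> by linarith
      hence "x^2 / l \<le> x^2 / (1/2)" using l by (intro divide_left_mono) auto
      moreover have "x^3 / l \<ge> 0" using x0 l by simp
      ultimately show ?thesis by simp
    qed
  next
    case False
    have "x^2 * 1 \<le> x^2 * (2 * x)" using False by (intro mult_left_mono) auto
    hence "x^2 \<le> 2 * x^3" by (simp add: power2_eq_square power3_eq_cube algebra_simps)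
    hence "x^2 / l \<le> (2 * x^3) / l" using l by (intro divide_right_mono) auto
    moreover have "(2 * x^3) / l = 2 * (x^3 / l)" by simp
    moreover have "x^2 \<ge> 0" by simp
    ultimately show ?thesis by linarith
  qed
  define S where "S = l + x^2 + x^3 / l"
  have "((l + x)^2 + K * x^2) / l \<le> (2 * l^2 + 2 * x^2 + l * x^2 + x^3) / l"
    using square Kx l by (intro divide_right_mono) auto
  also have "\<dots> = 2 * l + 2 * (x^2 / l) + x^2 + x^3 / l" using l by (simp add: field_simps power2_eq_square)
  also have "\<dots> \<le> 5 * S" using quadratic_term l by (simp add: S_def)
  finally have "e * (((l + x)^2 + K * x^2) / l) \<le> e * (5 * S)" using e by (intro mult_left_mono)
  moreover have S0: "S \<ge> 0" using l x0 by (simp add: S_def)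
  moreover have "l \<le> 5 * S" using S0 x0 l by (simp add: S_def)
  ultimately have "l + e * (((l + x)^2 + K * x^2) / l) \<le> 5 * (e + 1) * S"
    using e by (simp add: algebra_simps)
  then show ?thesis unfolding S_def x_def by simp
qed

section \<open>The Poisson distribution\<close>

context
  fixes l :: real
  assumes lpos: "0 < l"
begin

abbreviation "poi j \<equiv> pmf (poisson_pmf l) j"
abbreviation "poi_cdf w \<equiv> measure_pmf.prob (poisson_pmf l) {..w}"
abbreviation "poi_tail s \<equiv> measure_pmf.prob (poisson_pmf l) {s..}"

lemma poi_eq: "poi j = l ^ j / fact j * exp (- l)"
  using lpos by (simp add: pmf_poisson)

lemma poi_pos: "poi j > 0"
  using lpos by (simp add: poi_eq)

lemma poi_Suc: "poi (Suc j) = poi j * l / real (Suc j)"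
  using lpos by (simp add: poi_eq field_simps)

lemma poi_cdf_Suc: "poi_cdf (Suc n) = poi_cdf n + poi (Suc n)"
  by (simp add: measure_measure_pmf_finite)

lemma poi_tail_Suc: "poi_tail j = poi j + poi_tail (Suc j)"
  by (simp add: prob_atLeast_eq_1_minus measure_measure_pmf_finite)

lemma poi_tail_pos: "poi_tail s > 0"
  using poi_tail_Suc[of s] poi_pos[of s] measure_nonneg[of "measure_pmf (poisson_pmf l)" "{Suc s..}"]
  by linarith

lemma poi_tail_suminf: "poi_tail s = (\<Sum>i. poi (i + s))"
proof -
  have "(\<lambda>n. (l^n /\<^sub>R fact n) * exp (-l)) sums (exp l * exp (-l))"
    by (rule sums_mult2[OF exp_converges])
  moreover have "(\<lambda>n. (l^n /\<^sub>R fact n) * exp (-l)) = poi"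
    by (rule ext) (simp add: poi_eq divide_inverse)
  ultimately have total: "poi sums 1" by (simp add: exp_minus)
  have "poi_tail s = 1 - (\<Sum>j<s. poi j)"
    by (simp add: prob_atLeast_eq_1_minus measure_measure_pmf_finite)
  also have "\<dots> = (\<Sum>i. poi (i + s))"
    using suminf_split_initial_segment[OF sums_summable[OF total], of s] sums_unique[OF total]
    by simp
  finally show ?thesis .
qed

lemma poi_geometric_decay: "poi (i + s) \<le> poi s * (l / (s + 1)) ^ i"
proof (induction i)
  case 0 then show ?case by simp
next
  case (Suc i)
  have "poi (Suc i + s) = poi (i + s) * (l / real (Suc (i + s)))" using poi_Suc by simp
  also have "\<dots> \<le> poi (i + s) * (l / (s + 1))"
    using lpos poi_pos[of "i + s"] by (intro mult_left_mono divide_left_mono) auto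
  also have "\<dots> \<le> poi s * (l / (s + 1)) ^ i * (l / (s + 1))"
    using Suc.IH lpos by (intro mult_right_mono) auto
  finally show ?case by (simp add: field_simps)
qed

lemma poi_tail_le:
  assumes "l < real s + 1"
  shows "poi_tail s \<le> poi s * ((s + 1) / (s + 1 - l))"
proof -
  define q where "q = l / (s + 1)"
  have q0: "0 \<le> q" "q < 1" using lpos assms by (auto simp: q_def field_simps)
  have sg: "summable (\<lambda>i. poi s * q ^ i)" using q0 by (intro summable_mult summable_geometric) auto
  have decay: "\<And>i. poi (i + s) \<le> poi s * q ^ i" using poi_geometric_decay q_def by simp
  have "poi_tail s = (\<Sum>i. poi (i + s))" by (rule poi_tail_suminf)
  also have "\<dots> \<le> (\<Sum>i. poi s * q ^ i)"
    by (rule suminf_le[OF decay _ sg], rule summable_comparison_test'[OF sg]) (use decay in auto)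
  also have "\<dots> = poi s * (1 / (1 - q))" using q0 by (simp add: suminf_mult suminf_geometric)
  also have "1 / (1 - q) = (s + 1) / (s + 1 - l)" using assms by (simp add: q_def field_simps)
  finally show ?thesis by (simp add: add.commute)
qed

lemma poi_le_mode:
  assumes "real m < l" "l < real m + 1"
  shows "poi j \<le> poi m"
proof (cases "j \<le> m")
  case True
  have "poi (m - i) \<le> poi m" if "i \<le> m" for i using that
  proof (induction i)
    case (Suc i)
    have "Suc (m - Suc i) = m - i" using Suc by simp
    then have step: "poi (m - i) = poi (m - Suc i) * (l / real (m - i))"
      using poi_Suc[of "m - Suc i"] by simp
    have "real (m - i) \<le> l" "m - i > 0" using Suc assms by linarith+
    hence "l / real (m - i) \<ge> 1" by (simp add: field_simps)
    hence "poi (m - Suc i) * 1 \<le> poi (m - Suc i) * (l / real (m - i))"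
      using poi_pos[of "m - Suc i"] by (intro mult_left_mono) auto
    then show ?case using step Suc.IH Suc.prems by simp
  qed simp
  from this[of "m - j"] True show ?thesis by simp
next
  case False
  have "poi (m + i) \<le> poi m" for i
  proof (induction i)
    case (Suc i)
    have "l / real (Suc (m + i)) \<le> 1" using assms by (simp add: field_simps)
    hence "poi (m + i) * (l / real (Suc (m + i))) \<le> poi (m + i) * 1"
      using poi_pos[of "m + i"] by (intro mult_left_mono) auto
    then show ?case using Suc.IH poi_Suc[of "m + i"] by simp
  qed simp
  from this[of "j - m"] False show ?thesis by simp
qed

text \<open>The mode carries probability at least 1 / (2 l + 3): the values below 2 l number at most
  2 l + 1, each at most as likely as the mode, and the tail from 2 l is at most twice the mode.\<close>

lemma poi_mode_lower:
  assumes "real m < l" "l < real m + 1"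
  shows "poi m \<ge> 1 / (2 * l + 3)"
proof -
  define N where "N = nat \<lceil>2 * l\<rceil>"
  have N1: "2 * l \<le> real N" "real N \<le> 2 * l + 1" using lpos by (auto simp: N_def)
  have "measure_pmf.prob (poisson_pmf l) {..<N} \<le> N * poi m"
  proof -
    have "measure_pmf.prob (poisson_pmf l) {..<N} = (\<Sum>j<N. poi j)"
      by (simp add: measure_measure_pmf_finite)
    also have "\<dots> \<le> (\<Sum>j<N. poi m)" by (intro sum_mono poi_le_mode assms)
    finally show ?thesis by simp
  qed
  moreover have "poi_tail N \<le> 2 * poi m"
  proof -
    have "poi_tail N \<le> poi N * ((real N + 1) / (real N + 1 - l))" using N1 by (intro poi_tail_le) auto
    also have "(real N + 1) / (real N + 1 - l) \<le> 2" using N1 lpos by (simp add: field_simps)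
    hence "poi N * ((real N + 1) / (real N + 1 - l)) \<le> poi N * 2"
      using poi_pos[of N] by (intro mult_left_mono) auto
    also have "\<dots> \<le> 2 * poi m" using poi_le_mode[OF assms, of N] by simp
    finally show ?thesis .
  qed
  moreover have "measure_pmf.prob (poisson_pmf l) {..<N} + poi_tail N = 1"
    by (simp add: prob_atLeast_eq_1_minus)
  ultimately have "1 \<le> (real N + 2) * poi m" by (simp add: distrib_right)
  also have "\<dots> \<le> (2 * l + 3) * poi m" using N1 poi_pos[of m] by (intro mult_right_mono) auto
  finally show ?thesis using lpos by (simp add: divide_le_eq mult.commute)
qed

section \<open>Pointwise bounds for g1\<close>

lemma g1_Suc:
  "g1 l (Suc n) = 1 / real (Suc n) + (real (Suc n) - l) * poi_cdf (Suc n) / (l * real (Suc n) * poi (Suc n))"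
proof -
  have c1: "exp l * fact (Suc n) / l ^ (Suc n + 1) = 1 / (l * poi (Suc n))"
    using lpos by (simp add: poi_eq exp_minus field_simps)
  have "real (Suc n) * poi (Suc n) = l ^ Suc n / fact n * exp (- l)"
    using lpos by (simp add: poi_eq fact_Suc field_simps del: of_nat_Suc)
  moreover have "1 / (l ^ Suc n / fact n * exp (- l)) = exp l * fact n / l ^ Suc n"
    using lpos by (simp add: exp_minus field_simps)
  ultimately have c2: "exp l * fact (Suc n - 1) / l ^ (Suc n) = 1 / (real (Suc n) * poi (Suc n))"
    by simp
  have "g1 l (Suc n) = poi_cdf (Suc n) / (l * poi (Suc n)) - poi_cdf n / (real (Suc n) * poi (Suc n))"
    unfolding g1_def using c1 c2 by simp
  also have "\<dots> = 1 / real (Suc n) + (real (Suc n) - l) * poi_cdf (Suc n) / (l * real (Suc n) * poi (Suc n))"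
  proof -
    have alg: "Q / (l * p) - (Q - p) / (w * p) = 1 / w + (w - l) * Q / (l * w * p)"
      if "0 < p" "0 < w" for Q p w :: real
      using that lpos by (simp add: field_simps)
    have "poi_cdf n = poi_cdf (Suc n) - poi (Suc n)" using poi_cdf_Suc[of n] by simp
    then show ?thesis using alg[OF poi_pos] by simp
  qed
  finally show ?thesis .
qed

text \<open>The weights phi(w) = (w - l)_+ / P(Y = w) and psi(w) = phi(w) / w measure how much g1
  can exceed its size below the mean.\<close>

definition phi :: "nat \<Rightarrow> real" where
  "phi w = (if l < real w then (real w - l) / poi w else 0)"

definition psi :: "nat \<Rightarrow> real" where
  "psi w = (if l < real w then (real w - l) / (real w * poi w) else 0)"

lemma g1_le: "g1 l w \<le> 1 / l + psi w / l"
proof (cases w)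
  case 0
  then show ?thesis using lpos by (simp add: g1_def psi_def)
next
  case (Suc n)
  define p Q where "p = poi w" and "Q = poi_cdf w"
  have p0: "p > 0" by (simp add: p_def poi_pos)
  have w0: "real w > 0" using Suc by simp
  have g1_eq: "g1 l w = 1 / real w + (real w - l) * Q / (l * real w * p)"
    unfolding Suc g1_Suc p_def Q_def ..
  show ?thesis
  proof (cases "real w \<le> l")
    case True
    text \<open>Below the mean the two top atoms of the cdf already give Q \<ge> p (1 + w / l).\<close>
    have "poi n \<le> (\<Sum>j\<le>n. poi j)" by (rule member_le_sum) (auto intro: less_imp_le)
    moreover have "poi n = p * real w / l" using poi_Suc[of n] lpos by (simp add: p_def Suc field_simps)
    ultimately have "Q \<ge> p * (1 + real w / l)"
      using poi_cdf_Suc[of n] by (simp add: Q_def p_def Suc measure_measure_pmf_finite algebra_simps)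
    hence "(real w - l) * Q \<le> (real w - l) * (p * (1 + real w / l))"
      using True by (intro mult_left_mono_neg) auto
    hence "(real w - l) * Q / (l * real w * p) \<le> (real w - l) * (p * (1 + real w / l)) / (l * real w * p)"
      using lpos p0 w0 by (intro divide_right_mono) auto
    also have "\<dots> = (real w - l) * (l + real w) / (l * l * real w)" using lpos p0 w0 by (simp add: field_simps)
    finally have "g1 l w \<le> 1 / real w + (real w - l) * (l + real w) / (l * l * real w)"
      unfolding g1_eq by simp
    also have "\<dots> = real w / (l * l)" using lpos w0 by (simp add: field_simps)
    also have "\<dots> \<le> 1 / l" using lpos True by (simp add: field_simps)
    finally show ?thesis using True by (simp add: psi_def)
  next
    case False
    have "(real w - l) * Q \<le> real w - l" using False by (simp add: Q_def mult_left_le)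
    hence "(real w - l) * Q / (l * real w * p) \<le> (real w - l) / (l * real w * p)"
      using lpos p0 w0 by (intro divide_right_mono) auto
    moreover have "(real w - l) / (l * real w * p) = (real w - l) / (real w * p) / l" by simp
    moreover have "1 / real w \<le> 1 / l" using lpos False by (simp add: frac_le)
    ultimately have "g1 l w \<le> 1 / l + (real w - l) / (real w * p) / l" unfolding g1_eq by linarith
    then show ?thesis using False by (simp add: psi_def p_def)
  qed
qed

lemma mult_g1_le: "real w * g1 l w \<le> 1 + phi w / l"
proof (cases w)
  case 0
  then show ?thesis using lpos by (simp add: g1_def phi_def)
next
  case (Suc n)
  have alg: "w * (1 / w + (w - l) * Q / (l * w * p)) = 1 + (w - l) * Q / (l * p)"
    if "0 < p" "0 < w" for Q p w :: real
    using that lpos by (simp add: field_simps)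
  have wg1: "real w * g1 l w = 1 + (real w - l) * poi_cdf w / (l * poi w)"
    unfolding Suc g1_Suc by (rule alg[OF poi_pos]) simp
  show ?thesis
  proof (cases "real w \<le> l")
    case True
    have "(real w - l) * poi_cdf w \<le> 0" using True by (simp add: mult_nonpos_nonneg)
    hence "(real w - l) * poi_cdf w / (l * poi w) \<le> 0"
      by (rule divide_nonpos_pos) (use lpos poi_pos[of w] in auto)
    then show ?thesis unfolding wg1 using True by (simp add: phi_def)
  next
    case False
    have "(real w - l) * poi_cdf w \<le> real w - l" using False by (simp add: mult_left_le)
    hence "(real w - l) * poi_cdf w / (l * poi w) \<le> (real w - l) / (l * poi w)"
      using lpos poi_pos[of w] by (intro divide_right_mono) auto
    then show ?thesis unfolding wg1 using False by (simp add: phi_def mult.commute)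
  qed
qed

lemma phi_nonneg: "phi n \<ge> 0"
  using poi_pos[of n] by (simp add: phi_def)

lemma psi_nonneg: "psi n \<ge> 0"
  using poi_pos[of n] by (simp add: psi_def)

text \<open>Monotonicity: (w - l) grows while P(Y = w) shrinks by the factor l / (w + 1) above the mean.\<close>

lemma phi_mono: "1 \<le> r \<Longrightarrow> phi (r - 1) \<le> phi r"
proof -
  assume "1 \<le> r"
  then obtain n where r: "r = Suc n" by (cases r) auto
  show ?thesis
  proof (cases "l < real n")
    case True
    have "(real n - l) * l \<le> (real n + 1 - l) * (real n + 1)" using True lpos by (intro mult_mono) auto
    hence "(real n - l) * l / (l * poi n) \<le> (real n + 1 - l) * (real n + 1) / (l * poi n)"
      using lpos poi_pos[of n] by (intro divide_right_mono) auto
    then show ?thesis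
      using True lpos poi_pos[of n] by (simp add: r phi_def poi_Suc add.commute ac_simps)
  next
    case False
    then show ?thesis using phi_nonneg[of r] by (simp add: r phi_def)
  qed
qed

lemma psi_mono: "1 \<le> r \<Longrightarrow> psi (r - 1) \<le> psi r"
proof -
  assume "1 \<le> r"
  then obtain n where r: "r = Suc n" by (cases r) auto
  show ?thesis
  proof (cases "l < real n")
    case True
    have "(real n - l) * l \<le> (real n + 1 - l) * real n" using True lpos by (intro mult_mono) auto
    hence "(real n - l) * l / (real n * l * poi n) \<le> (real n + 1 - l) * real n / (real n * l * poi n)"
      using True lpos poi_pos[of n] by (intro divide_right_mono) auto
    then show ?thesis
      using True lpos poi_pos[of n] by (simp add: r psi_def poi_Suc add.commute ac_simps)
  next
    case False
    then show ?thesis using psi_nonneg[of r] by (simp add: r psi_def)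
  qed
qed

lemma mult_phi_mono: "1 \<le> r \<Longrightarrow> real (r - 1) * phi (r - 1) \<le> real r * phi r"
  using phi_mono[of r] phi_nonneg[of "r - 1"] by (intro mult_mono) auto

lemma phi_mult_poi: "phi r * poi r = max (real r - l) 0"
  using poi_pos[of r] lpos by (simp add: phi_def)

lemma psi_mult_poi: "1 \<le> r \<Longrightarrow> psi r * poi (r - 1) = max (real r - l) 0 / l"
proof -
  assume "1 \<le> r"
  then obtain n where r: "r = Suc n" by (cases r) auto
  have "real r * poi r = l * poi (r - 1)" unfolding r poi_Suc using lpos by simp
  then show ?thesis using poi_pos[of "r - 1"] poi_pos[of r] lpos r
    by (auto simp: psi_def field_simps)
qed

section \<open>Comparing the tails of W with the Poisson tails\<close>

lemma eta_nonneg: "eta pW l k \<ge> 0"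
proof -
  define S where "S = {r::nat. l \<le> real r \<and> r \<le> k}"
  have fin: "finite S" unfolding S_def by (rule finite_subset[of _ "{..k}"]) auto
  show ?thesis
  proof (cases "S = {}")
    case True then show ?thesis by (simp add: eta_def S_def[symmetric])
  next
    case False
    then obtain r where r: "r \<in> S" by auto
    have "0 \<le> measure_pmf.prob pW {r..} / poi_tail r" by simp
    also have "\<dots> \<le> Max ((\<lambda>r. measure_pmf.prob pW {r..} / poi_tail r) ` S)"
      using fin r by (intro Max_ge) auto
    finally show ?thesis using False by (simp add: eta_def S_def[symmetric])
  qed
qed

lemma tail_le_eta:
  assumes "l \<le> real r" "r \<le> k"
  shows "measure_pmf.prob pW {r..} \<le> eta pW l k * poi_tail r"
proof -
  define S where "S = {r::nat. l \<le> real r \<and> r \<le> k}"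
  have fin: "finite S" unfolding S_def by (rule finite_subset[of _ "{..k}"]) auto
  have r: "r \<in> S" using assms by (simp add: S_def)
  have "measure_pmf.prob pW {r..} / poi_tail r \<le> Max ((\<lambda>r. measure_pmf.prob pW {r..} / poi_tail r) ` S)"
    using fin r by (intro Max_ge) auto
  also have "\<dots> = eta pW l k" using r by (auto simp: eta_def S_def[symmetric])
  finally show ?thesis using poi_tail_pos[of r] by (simp add: divide_le_eq)
qed

lemma layer_le:
  fixes f :: "nat \<Rightarrow> real"
  assumes mono: "f (r - 1) \<le> f r" and flat: "real r \<le> l \<Longrightarrow> f r = f (r - 1)"
    and r: "1 \<le> r" "r \<le> k" and d: "d \<le> 1"
  shows "measure_pmf.prob pW {r - d..} * (f r - f (r - 1))
     \<le> eta pW l k * poi_tail (r - d) * (f r - f (r - 1))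
       + (if real (r - d) < l \<and> l < real r then f r - f (r - 1) else 0)"
proof -
  have D: "f r - f (r - 1) \<ge> 0" using mono by simp
  have E: "eta pW l k * poi_tail (r - d) * (f r - f (r - 1)) \<ge> 0" using eta_nonneg D by simp
  consider "real r \<le> l" | "l \<le> real (r - d)" | "real (r - d) < l \<and> l < real r" by linarith
  then show ?thesis
  proof cases
    case 1 then show ?thesis using flat E by simp
  next
    case 2
    have "measure_pmf.prob pW {r - d..} \<le> eta pW l k * poi_tail (r - d)"
      using 2 r by (intro tail_le_eta) auto
    hence "measure_pmf.prob pW {r - d..} * (f r - f (r - 1)) \<le> eta pW l k * poi_tail (r - d) * (f r - f (r - 1))"
      using D by (intro mult_right_mono) auto
    then show ?thesis using D by simp
  next
    case 3
    have "measure_pmf.prob pW {r - d..} * (f r - f (r - 1)) \<le> 1 * (f r - f (r - 1))"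
      using D by (intro mult_right_mono) auto
    then show ?thesis using 3 E by simp
  qed
qed

lemma expectation_truncated_le:
  fixes f :: "nat \<Rightarrow> real"
  assumes mono: "\<And>r. 1 \<le> r \<Longrightarrow> f (r - 1) \<le> f r" and flat: "\<And>r. real r \<le> l \<Longrightarrow> f r = f (r - 1)"
    and f0: "f 0 = 0" and d: "d \<le> 1"
  shows "measure_pmf.expectation pW (\<lambda>w. f (min (w + d) k))
     \<le> eta pW l k * (\<Sum>r\<in>{1..k}. poi_tail (r - d) * (f r - f (r - 1)))
       + (\<Sum>r\<in>{1..k}. if real (r - d) < l \<and> l < real r then f r - f (r - 1) else 0)"
proof -
  have "measure_pmf.expectation pW (\<lambda>w. f (min (w + d) k))
      = (\<Sum>r\<in>{1..k}. measure_pmf.prob pW {r - d..} * (f r - f (r - 1)))"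
    using expectation_truncated_layer[of pW f d k] f0 by simp
  also have "\<dots> \<le> (\<Sum>r\<in>{1..k}. eta pW l k * poi_tail (r - d) * (f r - f (r - 1))
      + (if real (r - d) < l \<and> l < real r then f r - f (r - 1) else 0))"
    by (intro sum_mono layer_le mono flat d) auto
  also have "\<dots> = eta pW l k * (\<Sum>r\<in>{1..k}. poi_tail (r - d) * (f r - f (r - 1)))
      + (\<Sum>r\<in>{1..k}. if real (r - d) < l \<and> l < real r then f r - f (r - 1) else 0)"
    by (simp add: sum.distrib sum_distrib_left mult.assoc)
  finally show ?thesis .
qed

text \<open>Without shift no increment crosses the mean.\<close>

corollary expectation_truncated_le_unshifted:
  fixes f :: "nat \<Rightarrow> real"
  assumes mono: "\<And>r. 1 \<le> r \<Longrightarrow> f (r - 1) \<le> f r" and flat: "\<And>r. real r \<le> l \<Longrightarrow> f r = f (r - 1)"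
    and f0: "f 0 = 0"
  shows "measure_pmf.expectation pW (\<lambda>w. f (min w k))
     \<le> eta pW l k * (\<Sum>r\<in>{1..k}. poi_tail r * (f r - f (r - 1)))"
proof -
  have "(\<Sum>r\<in>{1..k}. if real (r - 0) < l \<and> l < real r then f r - f (r - 1) else 0) = 0"
    by (intro sum.neutral) auto
  then show ?thesis using expectation_truncated_le[OF mono flat f0, of 0 pW k] by simp
qed

section \<open>Evaluating the weighted tail sums\<close>

lemma poi_tail_mult_phi_le: "poi_tail k * phi k \<le> (if l < real k then real k else 0)"
proof (cases "l < real k")
  case True
  have "poi_tail k \<le> poi k * ((real k + 1) / (real k + 1 - l))" using True by (intro poi_tail_le) auto
  hence "poi_tail k * phi k \<le> poi k * ((real k + 1) / (real k + 1 - l)) * phi k"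
    using phi_nonneg[of k] by (intro mult_right_mono) auto
  also have "\<dots> = (real k + 1) * (real k - l) / (real k + 1 - l)"
    using True poi_pos[of k] by (simp add: phi_def)
  also have "\<dots> \<le> real k"
  proof -
    have "(real k + 1) * (real k - l) \<le> real k * (real k + 1 - l)" using lpos by (simp add: algebra_simps)
    then show ?thesis using True by (simp add: divide_le_eq)
  qed
  finally show ?thesis using True by simp
next
  case False then show ?thesis by (simp add: phi_def)
qed

lemma poi_tail_mult_psi_le: "poi_tail (k - 1) * psi k \<le> (if l < real k then real k / l else 0)"
proof (cases "l < real k")
  case True
  hence k1: "k \<ge> 1" using lpos by simp
  hence rk: "real (k - 1) + 1 = real k" by simp
  have "poi_tail (k - 1) \<le> poi (k - 1) * ((real (k - 1) + 1) / (real (k - 1) + 1 - l))"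
    using True rk by (intro poi_tail_le) auto
  hence "poi_tail (k - 1) * psi k \<le> poi (k - 1) * (real k / (real k - l)) * psi k"
    unfolding rk using psi_nonneg[of k] by (intro mult_right_mono) auto
  also have "\<dots> = (real k / (real k - l)) * ((real k - l) / l)"
    using psi_mult_poi[OF k1] True by (simp add: ac_simps)
  also have "\<dots> = real k / l" using True lpos by (simp add: field_simps)
  finally show ?thesis using True by simp
next
  case False then show ?thesis by (simp add: psi_def)
qed

lemma tail_sum_phi_le:
  "(\<Sum>r\<in>{1..k}. poi_tail r * (phi r - phi (r - 1))) \<le> l + max (real k - l) 0 + (max (real k - l) 0)^2"
proof -
  have "(\<Sum>r\<in>{1..k}. poi_tail (r - 0) * (phi r - phi (r - 1)))
      = poi_tail (k - 0) * phi k + (\<Sum>r\<in>{1..<k}. phi r * poi (r - 0))"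
    by (rule summation_by_parts_tail[where T = "\<lambda>s. poi_tail s" and p = "\<lambda>j. poi j", OF poi_tail_Suc]) (use lpos in \<open>auto simp: phi_def\<close>)
  hence "(\<Sum>r\<in>{1..k}. poi_tail r * (phi r - phi (r - 1)))
      = poi_tail k * phi k + (\<Sum>r\<in>{1..<k}. max (real r - l) 0)"
    by (simp add: phi_mult_poi)
  moreover have "poi_tail k * phi k \<le> l + max (real k - l) 0"
    using poi_tail_mult_phi_le[of k] lpos by (auto split: if_splits)
  ultimately show ?thesis using sum_pos_part_le[where k = k and l = l] by simp
qed

lemma tail_sum_mult_phi_le:
  "(\<Sum>r\<in>{1..k}. poi_tail r * (real r * phi r - real (r - 1) * phi (r - 1)))
     \<le> (l + max (real k - l) 0)^2 + real k * (max (real k - l) 0)^2"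
proof -
  have "(\<Sum>r\<in>{1..k}. poi_tail (r - 0) * (real r * phi r - real (r - 1) * phi (r - 1)))
      = poi_tail (k - 0) * (real k * phi k) + (\<Sum>r\<in>{1..<k}. (real r * phi r) * poi (r - 0))"
    by (rule summation_by_parts_tail[where T = "\<lambda>s. poi_tail s" and p = "\<lambda>j. poi j", OF poi_tail_Suc, where f = "\<lambda>r. real r * phi r"]) auto
  moreover have "(\<Sum>r\<in>{1..<k}. (real r * phi r) * poi r) = (\<Sum>r\<in>{1..<k}. real r * max (real r - l) 0)"
    by (simp add: mult.assoc phi_mult_poi)
  ultimately have "(\<Sum>r\<in>{1..k}. poi_tail r * (real r * phi r - real (r - 1) * phi (r - 1)))
      = real k * (poi_tail k * phi k) + (\<Sum>r\<in>{1..<k}. real r * max (real r - l) 0)"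
    by (simp add: ac_simps)
  moreover have "real k * (poi_tail k * phi k) \<le> (l + max (real k - l) 0)^2"
  proof (cases "l < real k")
    case True
    have "real k * (poi_tail k * phi k) \<le> real k * real k"
      using poi_tail_mult_phi_le[of k] True by (intro mult_left_mono) auto
    then show ?thesis using True by (simp add: max_def power2_eq_square)
  next
    case False then show ?thesis by (simp add: phi_def)
  qed
  ultimately show ?thesis using sum_weighted_pos_part_le[where k = k and l = l] by simp
qed

lemma tail_sum_psi_le:
  "(\<Sum>r\<in>{1..k}. poi_tail (r - 1) * (psi r - psi (r - 1)))
     \<le> (if l < real k then real k / l else 0) + (max (real k - l) 0)^2 / l"
proof -
  have "(\<Sum>r\<in>{1..k}. poi_tail (r - 1) * (psi r - psi (r - 1)))
      = poi_tail (k - 1) * psi k + (\<Sum>r\<in>{1..<k}. psi r * poi (r - 1))"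
    by (rule summation_by_parts_tail[where T = "\<lambda>s. poi_tail s" and p = "\<lambda>j. poi j", OF poi_tail_Suc]) (use lpos in \<open>auto simp: psi_def\<close>)
  also have "(\<Sum>r\<in>{1..<k}. psi r * poi (r - 1)) = (\<Sum>r\<in>{1..<k}. max (real r - l) 0) / l"
    unfolding sum_divide_distrib by (intro sum.cong refl) (metis atLeastLessThan_iff psi_mult_poi)
  also have "\<dots> \<le> (max (real k - l) 0)^2 / l"
    using sum_pos_part_le[where k = k and l = l] lpos by (intro divide_right_mono) auto
  finally show ?thesis using poi_tail_mult_psi_le[of k] by simp
qed

text \<open>The increment of psi crossing the mean occurs at r = ceiling l only, where
  psi(r) \<le> 1 / (l P(Y = r - 1)) and r - 1 is the Poisson mode.\<close>

lemma crossing_increment_psi_le: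
  "(\<Sum>r\<in>{1..k}. if real (r - 1) < l \<and> l < real r then psi r - psi (r - 1) else 0)
     \<le> (if l < real k then (2 * l + 3) / l else 0)"
proof -
  define c where "c = nat \<lceil>l\<rceil>"
  define B where "B = (2 * l + 3) / l"
  have B0: "B \<ge> 0" using lpos by (simp add: B_def)
  have each: "(if real (r - 1) < l \<and> l < real r then psi r - psi (r - 1) else 0)
      \<le> (if r = c \<and> l < real k then B else 0)" if r: "r \<in> {1..k}" for r
  proof (cases "real (r - 1) < l \<and> l < real r")
    case True
    have r1: "1 \<le> r" using r by simp
    have rr: "real (r - 1) = real r - 1" using r1 by simp
    have "\<lceil>l\<rceil> = int r" using True rr by (intro ceiling_unique) auto
    hence "r = c" unfolding c_def by simp
    moreover have "l < real k" using True r by auto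
    moreover have "psi r - psi (r - 1) \<le> B"
    proof -
      have mode: "poi (r - 1) \<ge> 1 / (2 * l + 3)" by (rule poi_mode_lower) (use True rr in auto)
      have "psi r * poi (r - 1) = (real r - l) / l" using psi_mult_poi[OF r1] True by simp
      also have "\<dots> \<le> 1 / l" using True rr lpos by (intro divide_right_mono) auto
      also have "\<dots> \<le> B * poi (r - 1)" using mode lpos by (simp add: B_def field_simps)
      finally have "psi r \<le> B" using poi_pos[of "r - 1"] by simp
      moreover have "psi (r - 1) = 0" using True by (simp add: psi_def del: of_nat_diff)
      ultimately show ?thesis by simp
    qed
    ultimately show ?thesis using True by (simp del: of_nat_diff)
  next
    case False
    have "0 \<le> (if r = c \<and> l < real k then B else 0)" using B0 by simp
    then show ?thesis unfolding if_not_P[OF False] .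
  qed
  have "(\<Sum>r\<in>{1..k}. if real (r - 1) < l \<and> l < real r then psi r - psi (r - 1) else 0)
      \<le> (\<Sum>r\<in>{1..k}. if r = c \<and> l < real k then B else 0)"
    by (rule sum_mono) (rule each)
  also have "\<dots> \<le> (if l < real k then B else 0)"
    using B0 by (cases "l < real k") (auto simp: sum.delta)
  finally show ?thesis unfolding B_def .
qed

lemma expectation_g1_shifted_le:
  "measure_pmf.expectation pW (\<lambda>w. g1 l (min (w + 1) k))
     \<le> 5 * (eta pW l k + 1) * (1 / l + (pos_part (real k + 1 - l))^2 / l^2)"
proof -
  have "measure_pmf.expectation pW (\<lambda>w. g1 l (min (w + 1) k))
      \<le> measure_pmf.expectation pW (\<lambda>w. 1 / l + psi (min (w + 1) k) / l)"
    by (intro integral_mono integrable_truncated g1_le)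
  also have "\<dots> = 1 / l + measure_pmf.expectation pW (\<lambda>w. psi (min (w + 1) k)) / l"
    using integrable_truncated[of pW psi 1 k] by simp
  also have "measure_pmf.expectation pW (\<lambda>w. psi (min (w + 1) k))
      \<le> eta pW l k * ((if l < real k then real k / l else 0) + (max (real k - l) 0)^2 / l)
        + (if l < real k then (2 * l + 3) / l else 0)"
  proof -
    have "measure_pmf.expectation pW (\<lambda>w. psi (min (w + 1) k))
        \<le> eta pW l k * (\<Sum>r\<in>{1..k}. poi_tail (r - 1) * (psi r - psi (r - 1)))
          + (\<Sum>r\<in>{1..k}. if real (r - 1) < l \<and> l < real r then psi r - psi (r - 1) else 0)"
      by (rule expectation_truncated_le) (use psi_mono lpos in \<open>auto simp: psi_def\<close>)
    also have "\<dots> \<le> eta pW l k * ((if l < real k then real k / l else 0) + (max (real k - l) 0)^2 / l)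
        + (if l < real k then (2 * l + 3) / l else 0)"
      by (intro add_mono mult_left_mono tail_sum_psi_le crossing_increment_psi_le eta_nonneg)
    finally show ?thesis .
  qed
  also have "1 / l + (eta pW l k * ((if l < real k then real k / l else 0) + (max (real k - l) 0)^2 / l)
        + (if l < real k then (2 * l + 3) / l else 0)) / l
      \<le> 5 * (eta pW l k + 1) * (1 / l + (max (real k + 1 - l) 0)^2 / l^2)"
    by (rule final_inequality_1[OF lpos eta_nonneg])
  finally show ?thesis using lpos by (simp add: pos_part_def divide_right_mono)
qed

lemma expectation_mult_g1_le:
  "measure_pmf.expectation pW (\<lambda>w. real (min w k) * g1 l (min w k))
     \<le> 5 * (eta pW l k + 1) * (1 + (pos_part (real k - l))^2 / l)"
proof -
  have "measure_pmf.expectation pW (\<lambda>w. real (min w k) * g1 l (min w k))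
      \<le> measure_pmf.expectation pW (\<lambda>w. 1 + phi (min w k) / l)"
    using integrable_truncated[of pW "\<lambda>j. real j * g1 l j" 0 k] integrable_truncated[of pW phi 0 k]
    by (intro integral_mono mult_g1_le) simp_all
  also have "\<dots> = 1 + measure_pmf.expectation pW (\<lambda>w. phi (min w k)) / l"
    using integrable_truncated[of pW phi 0 k] by simp
  also have "measure_pmf.expectation pW (\<lambda>w. phi (min w k))
      \<le> eta pW l k * (\<Sum>r\<in>{1..k}. poi_tail r * (phi r - phi (r - 1)))"
    by (rule expectation_truncated_le_unshifted) (use phi_mono lpos in \<open>auto simp: phi_def\<close>)
  also have "\<dots> \<le> eta pW l k * (l + max (real k - l) 0 + (max (real k - l) 0)^2)"
    by (intro mult_left_mono tail_sum_phi_le eta_nonneg)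
  also have "1 + eta pW l k * (l + max (real k - l) 0 + (max (real k - l) 0)^2) / l
      \<le> 5 * (eta pW l k + 1) * (1 + (max (real k - l) 0)^2 / l)"
    by (rule final_inequality_2[OF lpos eta_nonneg]) (use lpos in \<open>cases k, auto\<close>)
  finally show ?thesis using lpos by (simp add: pos_part_def divide_right_mono)
qed

text \<open>The second moment uses w^2 g1(w) \<le> w (1 + phi(w) / l) and E min(W, k) \<le> E W = l.\<close>

lemma expectation_square_mult_g1_le:
  assumes intW: "integrable (measure_pmf pW) real" and EW: "measure_pmf.expectation pW real = l"
  shows "measure_pmf.expectation pW (\<lambda>w. (real (min w k))^2 * g1 l (min w k))
     \<le> 5 * (eta pW l k + 1) * (l + (pos_part (real k - l))^2 + (pos_part (real k - l))^3 / l)"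
proof -
  have int_min: "integrable (measure_pmf pW) (\<lambda>w. real (min w k))"
    using integrable_truncated[of pW real 0 k] by simp
  have int_phi: "integrable (measure_pmf pW) (\<lambda>w. real (min w k) * phi (min w k))"
    using integrable_truncated[of pW "\<lambda>j. real j * phi j" 0 k] by simp
  have pointwise: "(real (min w k))^2 * g1 l (min w k) \<le> real (min w k) + real (min w k) * phi (min w k) / l" for w
  proof -
    have "(real (min w k))^2 * g1 l (min w k) = real (min w k) * (real (min w k) * g1 l (min w k))"
      by (simp add: power2_eq_square)
    also have "\<dots> \<le> real (min w k) * (1 + phi (min w k) / l)"
      by (intro mult_left_mono mult_g1_le) auto
    finally show ?thesis by (simp add: algebra_simps)
  qed
  have "measure_pmf.expectation pW (\<lambda>w. (real (min w k))^2 * g1 l (min w k))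
      \<le> measure_pmf.expectation pW (\<lambda>w. real (min w k) + real (min w k) * phi (min w k) / l)"
    using integrable_truncated[of pW "\<lambda>j. (real j)^2 * g1 l j" 0 k] int_min int_phi
    by (intro integral_mono pointwise) simp_all
  also have "\<dots> = measure_pmf.expectation pW (\<lambda>w. real (min w k))
      + measure_pmf.expectation pW (\<lambda>w. real (min w k) * phi (min w k)) / l"
    using int_min int_phi by simp
  also have "measure_pmf.expectation pW (\<lambda>w. real (min w k)) \<le> l"
    using integral_mono[OF int_min intW, of] EW by simp
  also have "measure_pmf.expectation pW (\<lambda>w. real (min w k) * phi (min w k))
      \<le> eta pW l k * (\<Sum>r\<in>{1..k}. poi_tail r * (real r * phi r - real (r - 1) * phi (r - 1)))"
    by (rule expectation_truncated_le_unshifted[where f = "\<lambda>j. real j * phi j"])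
       (use mult_phi_mono lpos in \<open>auto simp: phi_def\<close>)
  also have "\<dots> \<le> eta pW l k * ((l + max (real k - l) 0)^2 + real k * (max (real k - l) 0)^2)"
    by (intro mult_left_mono tail_sum_mult_phi_le eta_nonneg)
  also have "l + eta pW l k * ((l + max (real k - l) 0)^2 + real k * (max (real k - l) 0)^2) / l
      \<le> 5 * (eta pW l k + 1) * (l + (max (real k - l) 0)^2 + (max (real k - l) 0)^3 / l)"
    by (rule final_inequality_3[OF lpos eta_nonneg]) (use lpos in \<open>cases k, auto\<close>)
  finally show ?thesis using lpos by (simp add: pos_part_def divide_right_mono)
qed

end

theorem lemma4p5:
  "\<exists>C::real. \<forall>(pW::nat pmf) (lam::real) (k::nat).
     lam > 0 \<and> integrable (measure_pmf pW) real \<and> measure_pmf.expectation pW real = lam \<longrightarrow>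
     measure_pmf.expectation pW (\<lambda>w. g1 lam (min (w + 1) k))
        \<le> C * (eta pW lam k + 1) * (1 / lam + (pos_part (real k + 1 - lam))^2 / lam^2)
   \<and> measure_pmf.expectation pW (\<lambda>w. real (min w k) * g1 lam (min w k))
        \<le> C * (eta pW lam k + 1) * (1 + (pos_part (real k - lam))^2 / lam)
   \<and> measure_pmf.expectation pW (\<lambda>w. (real (min w k))^2 * g1 lam (min w k))
        \<le> C * (eta pW lam k + 1) * (lam + (pos_part (real k - lam))^2 + (pos_part (real k - lam))^3 / lam)"
  using expectation_g1_shifted_le expectation_mult_g1_le expectation_square_mult_g1_le
  by (intro exI[of _ 5] allI impI conjI) blast+

end
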